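(* Let $\mathcal{C}$ be a hypergraph on $V$ and $F$ an edge of $\mathcal{C}$. (i) If $\operatorname{conn_h}(\operatorname{Ind}(\mathcal{C}-F))>\operatorname{conn_h}(\operatorname{Ind}(\mathcal{C}))$, then $\operatorname{conn_h}(\operatorname{Ind}(\mathcal{C}:F))\ge \operatorname{conn_h}(\operatorname{Ind}(\mathcal{C}))-|F|+1$. (ii) If $\operatorname{conn_h}(\operatorname{Ind}(\mathcal{C}:F))\ge \operatorname{conn_h}(\operatorname{Ind}(\mathcal{C}))-|F|+1$, then $\operatorname{conn_h}(\operatorname{Ind}(\mathcal{C}-F))\ge \operatorname{conn_h}(\operatorname{Ind}(\mathcal{C}))$.
   Context: A hypergraph $\mathcal{C}$ on a finite vertex set $V$ is a family of pairwise incomparable subsets of $V$ (its edges), each of cardinality at least $2$. The independence complex $\operatorname{Ind}(\mathcal{C})$ is the simplicial complex on $V$ whose faces are the subsets of $V$ containing no edge of $\mathcal{C}$ (if $V=\emptyset$ it is $\{\emptyset\}$). For an edge $F$: $\mathcal{C}-F$ is the hypergraph on $V$ with edge set $\mathcal{C}\setminus\{F\}$; $N_{\mathcal{C}}(F)=\bigcup\{E\setminus F : E\in\mathcal{C},\ |E\setminus F|=1\}$; and $\mathcal{C}:F$ is the hypergraph on $V\setminus(F\cup N_{\mathcal{C}}(F))$ whose edges are the members of cardinality at least $2$ among the inclusion-minimal members of the family $\{E\setminus F : E\in \mathcal{C}-F\}$. The homological connectivity $\operatorname{conn_h}(\Delta)$ is the largest integer $k$ such that $\tilde H_i(\Delta;\mathbb{Z})=0$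 for all $i\le k$ ($\infty$ if all vanish; $\operatorname{conn_h}(\{\emptyset\})=-2$). *)

theory Defs
  imports "HOL-Homology.Homology" "HOL-Library.Extended_Real"
begin

definition hypergraph :: "'a set \<Rightarrow> 'a set set \<Rightarrow> bool" where
  "hypergraph V C \<longleftrightarrow> finite V \<and>
     (\<forall>E\<in>C. E \<subseteq> V \<and> 2 \<le> card E) \<and>
     (\<forall>E\<in>C. \<forall>E'\<in>C. E \<subseteq> E' \<longrightarrow> E = E')"

definition Ind :: "'a set \<Rightarrow> 'a set set \<Rightarrow> 'a set set" where
  "Ind V C = {S. S \<subseteq> V \<and> \<not> (\<exists>E\<in>C. E \<subseteq> S)}"

definition hdel :: "'a set set \<Rightarrow> 'a set \<Rightarrow> 'a set set" where
  "hdel C F = C - {F}"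

definition hnbr :: "'a set set \<Rightarrow> 'a set \<Rightarrow> 'a set" where
  "hnbr C F = \<Union>{E - F | E. E \<in> C \<and> card (E - F) = 1}"

definition hcolon_vertices :: "'a set \<Rightarrow> 'a set set \<Rightarrow> 'a set \<Rightarrow> 'a set" where
  "hcolon_vertices V C F = V - (F \<union> hnbr C F)"

definition hcolon_edges :: "'a set set \<Rightarrow> 'a set \<Rightarrow> 'a set set" where
  "hcolon_edges C F =
     (let M = {E - F | E. E \<in> hdel C F}
      in {G \<in> M. (\<forall>H\<in>M. H \<subseteq> G \<longrightarrow> H = G) \<and> 2 \<le> card G})"

definition geom_real :: "'a set set \<Rightarrow> ('a \<Rightarrow> real) topology" where
  "geom_real \<Delta> = subtopology (powertop_real UNIV)
     {x. (\<forall>v. 0 \<le> x v) \<and> {v. x v \<noteq> 0} \<in> \<Delta> \<and> sum x {v. x v \<noteq> 0} = 1}"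

text \<open>The complex {{}} has
  reduced homology Z in degree -1 (augmented convention), so its connectivity is -2;
  every other complex containing the empty face has a nonempty realization, whose
  reduced simplicial homology is the reduced singular homology of the realization.\<close>
definition conn_h :: "'a set set \<Rightarrow> ereal" where
  "conn_h \<Delta> =
     (if \<Delta> = {{}} then -2
      else if (\<forall>i::int. trivial_group (reduced_homology_group i (geom_real \<Delta>))) then \<infinity>
      else ereal (of_int (GREATEST k::int. \<forall>i\<le>k.
                     trivial_group (reduced_homology_group i (geom_real \<Delta>)))))"

end

theory Submission
  imports Defs
begin

(* Write K = Ind(C - F) and A = Ind(C); A consists of the faces of K not containing F.
   In the long exact sequence of the pair (|K|, |A|) everything hinges on the relative groups.
   |A| is a deformation retract of |K| minus the barycentre b of F, so by excision and the
   contractibility of a small star around b, H_p(|K|,|A|) is H~_{p-1} of the link of b.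
   That link is the join of the boundary of the simplex F with the link of F, and the link of F
   in K is exactly Ind(C:F).  Joining with the boundary of an (|F|-1)-simplex is an
   (|F|-1)-fold suspension, hence H_p(|K|,|A|) = H~_{p-|F|}(Ind(C:F)); both claims then
   follow from exactness by comparing the vanishing ranges. *)

section \<open>Abstract simplicial complexes and their realizations\<close>

definition abstract_complex :: "'a set set \<Rightarrow> bool" where
  "abstract_complex K \<longleftrightarrow> (\<forall>\<sigma>\<in>K. finite \<sigma>) \<and> (\<forall>\<sigma>\<in>K. \<forall>\<tau>. \<tau> \<subseteq> \<sigma> \<longrightarrow> \<tau> \<in> K)"

lemma abstract_complex_finite: "abstract_complex K \<Longrightarrow> \<sigma> \<in> K \<Longrightarrow> finite \<sigma>"
  unfolding abstract_complex_def by blast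

lemma abstract_complex_subset: "abstract_complex K \<Longrightarrow> \<sigma> \<in> K \<Longrightarrow> \<tau> \<subseteq> \<sigma> \<Longrightarrow> \<tau> \<in> K"
  unfolding abstract_complex_def by blast

definition geom_carrier :: "'a set set \<Rightarrow> ('a \<Rightarrow> real) set" where
  "geom_carrier \<Delta> = {x. (\<forall>v. 0 \<le> x v) \<and> {v. x v \<noteq> 0} \<in> \<Delta> \<and> sum x {v. x v \<noteq> 0} = 1}"

lemma geom_real_eq: "geom_real \<Delta> = subtopology (powertop_real UNIV) (geom_carrier \<Delta>)"
  unfolding geom_real_def geom_carrier_def ..

lemma topspace_geom_real [simp]: "topspace (geom_real \<Delta>) = geom_carrier \<Delta>"
  unfolding geom_real_eq by simp

lemma subtopology_geom_real:
  "subtopology (geom_real \<Delta>) W = subtopology (powertop_real UNIV) (geom_carrier \<Delta> \<inter> W)"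
  unfolding geom_real_eq subtopology_subtopology ..

lemma geom_carrier_mono: "\<Delta>' \<subseteq> \<Delta> \<Longrightarrow> geom_carrier \<Delta>' \<subseteq> geom_carrier \<Delta>"
  unfolding geom_carrier_def by auto

lemma subtopology_geom_real_carrier:
  "\<Delta>' \<subseteq> \<Delta> \<Longrightarrow> subtopology (geom_real \<Delta>) (geom_carrier \<Delta>') = geom_real \<Delta>'"
  using geom_carrier_mono[of \<Delta>' \<Delta>] by (simp add: geom_real_eq subtopology_subtopology Int_absorb1)

lemma geom_carrierD:
  assumes "x \<in> geom_carrier K"
  shows "\<And>v. 0 \<le> x v" "{v. x v \<noteq> 0} \<in> K" "sum x {v. x v \<noteq> 0} = 1"
  using assms unfolding geom_carrier_def by auto

lemma geom_carrier_finite_support: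
  "abstract_complex K \<Longrightarrow> x \<in> geom_carrier K \<Longrightarrow> finite {v. x v \<noteq> 0}"
  using abstract_complex_finite geom_carrierD(2) by blast

lemma geom_carrier_sum:
  assumes "abstract_complex K" "x \<in> geom_carrier K" "finite T" "{v. x v \<noteq> 0} \<subseteq> T"
  shows "sum x T = 1"
proof -
  have "sum x T = sum x {v. x v \<noteq> 0}"
    by (rule sum.mono_neutral_right) (use assms in auto)
  then show ?thesis using geom_carrierD(3)[OF assms(2)] by simp
qed

lemma geom_carrierI:
  assumes "abstract_complex K" "T \<in> K" "\<And>v. 0 \<le> z v" "\<And>v. v \<notin> T \<Longrightarrow> z v = 0" "sum z T = 1"
  shows "z \<in> geom_carrier K"
proof -
  have fin: "finite T" using assms(1,2) by (rule abstract_complex_finite)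
  have sub: "{v. z v \<noteq> 0} \<subseteq> T" using assms(4) by auto
  have "sum z {v. z v \<noteq> 0} = sum z T"
    by (rule sum.mono_neutral_left) (use fin sub in auto)
  then show ?thesis
    using assms abstract_complex_subset[OF assms(1,2) sub] unfolding geom_carrier_def by auto
qed

lemma geom_carrier_vertex:
  "abstract_complex K \<Longrightarrow> {u} \<in> K \<Longrightarrow> (\<lambda>v. if v = u then 1 else 0 :: real) \<in> geom_carrier K"
  by (rule geom_carrierI) auto

lemma geom_carrier_eq_empty_iff:
  assumes "abstract_complex K"
  shows "geom_carrier K = {} \<longleftrightarrow> K \<subseteq> {{}}"
proof
  assume empty: "geom_carrier K = {}"
  show "K \<subseteq> {{}}"
  proof
    fix \<sigma> assume "\<sigma> \<in> K"
    have "{u} \<notin> K" for u using geom_carrier_vertex[OF assms] empty by blast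
    then show "\<sigma> \<in> {{}}" using abstract_complex_subset[OF assms \<open>\<sigma> \<in> K\<close>] by blast
  qed
qed (auto simp: geom_carrier_def)

lemma empty_face_if_geom_carrier_nonempty:
  "abstract_complex K \<Longrightarrow> geom_carrier K \<noteq> {} \<Longrightarrow> {} \<in> K"
  using abstract_complex_subset geom_carrierD(2) by blast

lemma geom_carrier_convex_combination:
  assumes K: "abstract_complex K" and x: "x \<in> geom_carrier K" and d: "d \<in> geom_carrier K"
    and face: "{v. x v \<noteq> 0} \<union> {v. d v \<noteq> 0} \<in> K" and t: "t \<in> {0..1}"
  shows "(\<lambda>v. (1 - t) * x v + t * d v) \<in> geom_carrier K"
proof (rule geom_carrierI[OF K face])
  let ?T = "{v. x v \<noteq> 0} \<union> {v. d v \<noteq> 0}"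
  have fin: "finite ?T" using K face by (rule abstract_complex_finite)
  show "0 \<le> (1 - t) * x v + t * d v" for v
    using t geom_carrierD(1)[OF x, of v] geom_carrierD(1)[OF d, of v] by simp
  show "(1 - t) * x v + t * d v = 0" if "v \<notin> ?T" for v using that by simp
  have "sum x ?T = 1" "sum d ?T = 1"
    using geom_carrier_sum[OF K x fin] geom_carrier_sum[OF K d fin] by auto
  then show "(\<Sum>v\<in>?T. (1 - t) * x v + t * d v) = 1"
    by (simp add: sum.distrib flip: sum_distrib_left)
qed

lemma continuous_map_geom_real_coordinate [continuous_intros]:
  "continuous_map (subtopology (geom_real K) W) euclideanreal (\<lambda>x. x v)"
  unfolding subtopology_geom_real
  by (rule continuous_map_from_subtopology) (rule continuous_map_product_projection, simp)

lemma continuous_map_geom_real_coordinate_full [continuous_intros]: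
  "continuous_map (geom_real K) euclideanreal (\<lambda>x. x v)"
  using continuous_map_geom_real_coordinate[of K UNIV v] by simp

lemma continuous_map_geom_real_snd_coordinate [continuous_intros]:
  "continuous_map (prod_topology X (subtopology (geom_real K) W)) euclideanreal (\<lambda>z. snd z v)"
  using continuous_map_compose[OF continuous_map_snd continuous_map_geom_real_coordinate]
  by (simp add: o_def)

lemma continuous_map_unit_interval_fst [continuous_intros]:
  "continuous_map (prod_topology (top_of_set {0..1::real}) Y) euclideanreal fst"
  using continuous_map_fst continuous_map_into_fulltopology by blast

lemma continuous_map_Min_image:
  assumes "finite S" "S \<noteq> {}" "\<And>v. v \<in> S \<Longrightarrow> continuous_map X euclideanreal (\<lambda>x. g x v)"
  shows "continuous_map X euclideanreal (\<lambda>x. Min ((\<lambda>v. g x v) ` S))"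
  using assms
proof (induction S rule: finite_ne_induct)
  case (insert v S)
  then have "(\<lambda>x. Min ((\<lambda>v. g x v) ` insert v S)) = (\<lambda>x. min (g x v) (Min ((\<lambda>v. g x v) ` S)))"
    by simp
  then show ?case using insert by (simp add: continuous_map_real_min)
qed simp

lemma continuous_map_into_geom_real:
  "continuous_map X (subtopology (geom_real K) W) g \<longleftrightarrow>
     (\<forall>v. continuous_map X euclideanreal (\<lambda>x. g x v)) \<and> g ` topspace X \<subseteq> geom_carrier K \<inter> W"
  unfolding subtopology_geom_real continuous_map_in_subtopology continuous_map_componentwise_UNIV
  by (auto simp: image_subset_iff_funcset)

lemma continuous_map_into_geom_real_full:
  "continuous_map X (geom_real K) g \<longleftrightarrow>
     (\<forall>v. continuous_map X euclideanreal (\<lambda>x. g x v)) \<and> g ` topspace X \<subseteq> geom_carrier K"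
  using continuous_map_into_geom_real[of X K UNIV g] by simp

lemma homotopic_with_geom_real:
  fixes h :: "real \<times> ('a \<Rightarrow> real) \<Rightarrow> 'a \<Rightarrow> real"
  assumes cont: "\<And>v. continuous_map (prod_topology (top_of_set {0..1}) (subtopology (geom_real K) W))
                        euclideanreal (\<lambda>z. h z v)"
    and into: "\<And>t x. t \<in> {0..1} \<Longrightarrow> x \<in> geom_carrier K \<inter> W \<Longrightarrow> h (t, x) \<in> geom_carrier K \<inter> W"
    and P: "\<And>t. t \<in> {0..1} \<Longrightarrow> P (\<lambda>x. h (t, x))"
    and P_cong: "\<And>f g. (\<And>x. x \<in> geom_carrier K \<inter> W \<Longrightarrow> f x = g x) \<Longrightarrow> P f \<longleftrightarrow> P g"
    and h0: "\<And>x. x \<in> geom_carrier K \<inter> W \<Longrightarrow> h (0, x) = f x"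
    and h1: "\<And>x. x \<in> geom_carrier K \<inter> W \<Longrightarrow> h (1, x) = g x"
  shows "homotopic_with P (subtopology (geom_real K) W) (subtopology (geom_real K) W) f g"
proof -
  let ?Y = "subtopology (geom_real K) W"
  have top: "topspace ?Y = geom_carrier K \<inter> W" by (simp add: topspace_subtopology)
  have h: "continuous_map (prod_topology (top_of_set {0..1}) ?Y) ?Y h"
    unfolding continuous_map_into_geom_real
  proof (intro conjI allI)
    show "h ` topspace (prod_topology (top_of_set {0..1}) ?Y) \<subseteq> geom_carrier K \<inter> W"
      using into by (auto simp: topspace_subtopology)
  qed (rule cont)
  show ?thesis
  proof (rule iffD2[OF homotopic_with])
    show "P f' \<longleftrightarrow> P g'" if "\<And>x. x \<in> topspace ?Y \<Longrightarrow> f' x = g' x" for f' g'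
      by (rule P_cong) (use that in \<open>simp add: top\<close>)
  qed (intro exI[of _ h] conjI ballI h; simp add: top h0 h1 P)
qed

lemma contractible_space_geom_real_star_shaped:
  assumes "\<And>t x. t \<in> {0..1} \<Longrightarrow> x \<in> geom_carrier K \<inter> W \<Longrightarrow>
             (\<lambda>v. (1 - t) * x v + t * d v) \<in> geom_carrier K \<inter> W"
  shows "contractible_space (subtopology (geom_real K) W)"
proof -
  have "homotopic_with (\<lambda>x. True) (subtopology (geom_real K) W) (subtopology (geom_real K) W)
          id (\<lambda>x. d)"
    by (rule homotopic_with_geom_real[where h = "\<lambda>z v. (1 - fst z) * snd z v + fst z * d v"])
       (use assms in \<open>auto intro!: continuous_intros\<close>)
  then show ?thesis unfolding contractible_space_def by blast
qed

lemma contractible_space_geom_real_apex: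
  assumes K: "abstract_complex K" and u: "{u} \<in> K" and apex: "\<And>\<sigma>. \<sigma> \<in> K \<Longrightarrow> insert u \<sigma> \<in> K"
  shows "contractible_space (geom_real K)"
proof -
  let ?d = "\<lambda>v. if v = u then 1 else 0 :: real"
  have "contractible_space (subtopology (geom_real K) (geom_carrier K))"
  proof (rule contractible_space_geom_real_star_shaped[where d = ?d])
    fix t :: real and x assume t: "t \<in> {0..1}" and x: "x \<in> geom_carrier K \<inter> geom_carrier K"
    have "{v. x v \<noteq> 0} \<union> {v. ?d v \<noteq> 0} = insert u {v. x v \<noteq> 0}" by auto
    then have "{v. x v \<noteq> 0} \<union> {v. ?d v \<noteq> 0} \<in> K"
      using apex geom_carrierD(2) x by auto
    then show "(\<lambda>v. (1 - t) * x v + t * ?d v) \<in> geom_carrier K \<inter> geom_carrier K"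
      using geom_carrier_convex_combination[OF K _ geom_carrier_vertex[OF K u] _ t] x by simp
  qed
  then show ?thesis by (metis subtopology_topspace topspace_geom_real)
qed

section \<open>Reduced homology of a complex\<close>

text \<open>The empty complex has reduced homology in degree -1 only (augmented convention).\<close>
definition trivial_reduced_homology :: "int \<Rightarrow> 'a set set \<Rightarrow> bool" where
  "trivial_reduced_homology q \<Delta> =
     (if geom_carrier \<Delta> = {} then q \<noteq> -1
      else trivial_group (reduced_homology_group q (geom_real \<Delta>)))"

lemma iso_trivial_group_iff:
  "h \<in> iso G H \<Longrightarrow> group G \<Longrightarrow> group H \<Longrightarrow> trivial_group G \<longleftrightarrow> trivial_group H"
  by (meson is_isoI isomorphic_group_triviality)

lemma trivial_homology_group_contractible_iff:
  assumes "contractible_space Y" "topspace Y \<noteq> {}"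
  shows "trivial_group (homology_group p Y) \<longleftrightarrow> p \<noteq> 0"
proof (cases "p = 0")
  case True
  have "homology_group 0 Y \<cong> integer_group"
    by (rule isomorphic_integer_zeroth_homology_group)
       (use assms contractible_imp_path_connected_space in auto)
  moreover have "\<not> trivial_group integer_group"
    unfolding trivial_group_def by (metis carrier_integer_group UNIV_I singletonD zero_neq_one)
  ultimately show ?thesis
    using True isomorphic_group_triviality by (metis group_integer_group group_relative_homology_group)
next
  case False
  then show ?thesis
    using trivial_reduced_homology_group_contractible_space[OF assms(1), of p]
    by (simp add: un_reduced_homology_group)
qed

lemma exact_seq_trivial_middle:
  assumes "exact_seq ([C,B,A],[g,f])" "trivial_group A" "trivial_group C"
  shows "trivial_group B"
proof -
  have gh: "group_hom A B f" and gB: "g \<in> hom B C" and ker: "kernel B C g = f ` carrier A"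
    using assms(1) by auto
  have "kernel B C g = carrier B"
    using assms(3) gB unfolding kernel_def trivial_group_def hom_def by auto
  moreover have "f ` carrier A = {one B}"
    using assms(2) group_hom.hom_one[OF gh] unfolding trivial_group_def by auto
  ultimately show ?thesis
    using ker gh unfolding trivial_group_def group_hom_def group_hom_axioms_def by auto
qed

lemma trivial_relative_homology_group_triple:
  assumes "T \<subseteq> S" "\<And>q. trivial_group (relative_homology_group q (subtopology X S) T)"
  shows "trivial_group (relative_homology_group p X T) \<longleftrightarrow>
         trivial_group (relative_homology_group p X S)"
proof -
  have "exact_seq
         ([relative_homology_group (p - 1) (subtopology X S) T, relative_homology_group p X S,
           relative_homology_group p X T, relative_homology_group p (subtopology X S) T],
          [hom_relboundary p X S T, hom_induced p X T X S id, hom_induced p (subtopology X S) T X T id])"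
    using homology_exactness_triple_1[OF assms(1)] homology_exactness_triple_3[OF assms(1)]
    by (simp add: exact_seq_cons_iff)
  then have "hom_induced p X T X S id \<in> iso (relative_homology_group p X T) (relative_homology_group p X S)"
    using very_short_exact_sequence assms(2) by blast
  then show ?thesis by (rule iso_trivial_group_iff) simp_all
qed

lemma trivial_reduced_homology_pair:
  assumes AK: "A \<subseteq> K" and A: "geom_carrier A \<noteq> {}"
  shows "trivial_reduced_homology i K \<Longrightarrow> trivial_reduced_homology (i - 1) A \<Longrightarrow>
           trivial_group (relative_homology_group i (geom_real K) (geom_carrier A))"
    and "trivial_group (relative_homology_group i (geom_real K) (geom_carrier A)) \<Longrightarrow>
           trivial_reduced_homology i A \<Longrightarrow> trivial_reduced_homology i K"
proof -
  have K: "geom_carrier K \<noteq> {}" using A geom_carrier_mono[OF AK] by blast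
  have ne: "topspace (geom_real K) \<inter> geom_carrier A \<noteq> {}" using A geom_carrier_mono[OF AK] by auto
  note sub = subtopology_geom_real_carrier[OF AK]
  show "trivial_group (relative_homology_group i (geom_real K) (geom_carrier A))"
    if "trivial_reduced_homology i K" "trivial_reduced_homology (i - 1) A"
    by (rule exact_seq_trivial_middle[OF homology_exactness_reduced_1[OF ne, unfolded sub]])
       (use that A K in \<open>auto simp: trivial_reduced_homology_def\<close>)
  show "trivial_reduced_homology i K"
    if "trivial_group (relative_homology_group i (geom_real K) (geom_carrier A))"
       "trivial_reduced_homology i A"
    using exact_seq_trivial_middle[OF homology_exactness_reduced_3[where p = i and X = "geom_real K"
          and S = "geom_carrier A", unfolded sub]] that A K
    by (auto simp: trivial_reduced_homology_def)
qed

lemma trivial_reduced_homology_iff_relative_contractible: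
  assumes AK: "A \<subseteq> K" and contr: "contractible_space (geom_real A)" and A: "geom_carrier A \<noteq> {}"
  shows "trivial_reduced_homology p K \<longleftrightarrow>
           trivial_group (relative_homology_group p (geom_real K) (geom_carrier A))"
proof -
  have ne: "topspace (geom_real K) \<inter> geom_carrier A \<noteq> {}" using A geom_carrier_mono[OF AK] by auto
  then have "geom_carrier K \<noteq> {}" by auto
  then show ?thesis
    using iso_trivial_group_iff[OF iso_reduced_homology_by_contractible[OF _ ne]]
      contr subtopology_geom_real_carrier[OF AK]
    by (simp add: trivial_reduced_homology_def)
qed

section \<open>Radial projection from the barycentre of a face\<close>

text \<open>For a face S, the point face_join S l y lies on the segment from y to the
  barycentre of S and has smallest S-coordinate l (when y has smallest S-coordinate 0);
  face_proj S undoes this, projecting radially away from the barycentre.\<close>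

definition face_min :: "'a set \<Rightarrow> ('a \<Rightarrow> real) \<Rightarrow> real" where
  "face_min S x = Min (x ` S)"

definition face_proj :: "'a set \<Rightarrow> ('a \<Rightarrow> real) \<Rightarrow> ('a \<Rightarrow> real)" where
  "face_proj S x =
     (\<lambda>v. (x v - (if v \<in> S then face_min S x else 0)) / (1 - real (card S) * face_min S x))"

definition face_join :: "'a set \<Rightarrow> real \<Rightarrow> ('a \<Rightarrow> real) \<Rightarrow> ('a \<Rightarrow> real)" where
  "face_join S l y = (\<lambda>v. (1 - real (card S) * l) * y v + (if v \<in> S then l else 0))"

lemma face_min_le: "finite S \<Longrightarrow> v \<in> S \<Longrightarrow> face_min S x \<le> x v"
  unfolding face_min_def by auto

lemma face_min_attained:
  assumes "finite S" "S \<noteq> {}"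
  shows "\<exists>v\<in>S. x v = face_min S x"
proof -
  have "Min (x ` S) \<in> x ` S" using assms by (intro Min_in) auto
  then show ?thesis by (auto simp: face_min_def)
qed

lemma face_min_greatest:
  "finite S \<Longrightarrow> S \<noteq> {} \<Longrightarrow> (\<And>v. v \<in> S \<Longrightarrow> c \<le> x v) \<Longrightarrow> c \<le> face_min S x"
  unfolding face_min_def by simp

lemma face_min_nonneg: "(\<And>v. 0 \<le> x v) \<Longrightarrow> finite S \<Longrightarrow> S \<noteq> {} \<Longrightarrow> 0 \<le> face_min S x"
  using face_min_attained by metis

lemma face_min_pos_iff:
  assumes "\<And>v. 0 \<le> x v" "finite S" "S \<noteq> {}"
  shows "0 < face_min S x \<longleftrightarrow> S \<subseteq> {v. x v \<noteq> 0}"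
proof
  assume pos: "0 < face_min S x"
  show "S \<subseteq> {v. x v \<noteq> 0}"
  proof
    fix v assume "v \<in> S"
    then show "v \<in> {v. x v \<noteq> 0}" using face_min_le[OF assms(2), of v x] pos by auto
  qed
next
  assume "S \<subseteq> {v. x v \<noteq> 0}"
  moreover obtain v where "v \<in> S" "x v = face_min S x" using face_min_attained[OF assms(2,3)] by blast
  ultimately show "0 < face_min S x" using assms(1)[of v] by force
qed

lemma face_min_eq_0_iff:
  assumes "\<And>v. 0 \<le> x v" "finite S" "S \<noteq> {}"
  shows "face_min S x = 0 \<longleftrightarrow> \<not> S \<subseteq> {v. x v \<noteq> 0}"
  using face_min_pos_iff[of x, OF assms] face_min_nonneg[of x, OF assms] by linarith

lemma face_min_bound:
  assumes K: "abstract_complex K" and x: "x \<in> geom_carrier K" and S: "finite S"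
  shows "real (card S) * face_min S x \<le> 1"
proof -
  have fin: "finite (S \<union> {v. x v \<noteq> 0})" using S geom_carrier_finite_support[OF K x] by simp
  have "real (card S) * face_min S x = (\<Sum>v\<in>S. face_min S x)" by simp
  also have "\<dots> \<le> (\<Sum>v\<in>S. x v)" by (rule sum_mono) (use face_min_le[OF S] in auto)
  also have "\<dots> \<le> (\<Sum>v\<in>S \<union> {v. x v \<noteq> 0}. x v)"
    by (rule sum_mono2) (use fin geom_carrierD(1)[OF x] in auto)
  also have "\<dots> = 1" by (rule geom_carrier_sum[OF K x fin]) auto
  finally show ?thesis .
qed

lemma continuous_map_face_min [continuous_intros]:
  assumes "finite S" "S \<noteq> {}" "\<And>v. continuous_map X euclideanreal (\<lambda>z. \<phi> z v)"
  shows "continuous_map X euclideanreal (\<lambda>z. face_min S (\<phi> z))"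
  unfolding face_min_def by (rule continuous_map_Min_image) (use assms in auto)

lemma continuous_map_face_proj:
  assumes "finite S" "S \<noteq> {}" "\<And>v. continuous_map X euclideanreal (\<lambda>z. \<phi> z v)"
    and "\<And>z. z \<in> topspace X \<Longrightarrow> real (card S) * face_min S (\<phi> z) < 1"
  shows "continuous_map X euclideanreal (\<lambda>z. face_proj S (\<phi> z) v)"
proof -
  have eq: "(\<lambda>z. face_proj S (\<phi> z) v) = (\<lambda>z. (\<phi> z v - (if v \<in> S then 1 else 0) * face_min S (\<phi> z))
          / (1 - real (card S) * face_min S (\<phi> z)))"
    by (simp add: face_proj_def)
  show ?thesis
    unfolding eq by (intro continuous_intros assms(1-3)) (use assms(4) in force)
qed

lemma continuous_map_face_join:
  assumes "continuous_map X euclideanreal l" "\<And>v. continuous_map X euclideanreal (\<lambda>z. \<phi> z v)"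
  shows "continuous_map X euclideanreal (\<lambda>z. face_join S (l z) (\<phi> z) v)"
proof -
  have eq: "(\<lambda>z. face_join S (l z) (\<phi> z) v) =
          (\<lambda>z. (1 - real (card S) * l z) * \<phi> z v + (if v \<in> S then 1 else 0) * l z)"
    by (simp add: face_join_def)
  show ?thesis
    unfolding eq by (intro continuous_intros assms)
qed

lemma face_join_0 [simp]: "face_join S 0 y = y"
  unfolding face_join_def by auto

lemma face_proj_eq_self: "face_min S x = 0 \<Longrightarrow> face_proj S x = x"
  unfolding face_proj_def by auto

lemma face_join_face_proj:
  "real (card S) * face_min S x < 1 \<Longrightarrow> face_join S (face_min S x) (face_proj S x) = x"
  by (auto simp: face_join_def face_proj_def field_simps)

lemma face_proj_face_join:
  "face_min S (face_join S l y) = l \<Longrightarrow> real (card S) * l < 1 \<Longrightarrow> face_proj S (face_join S l y) = y"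
  by (auto simp: face_join_def face_proj_def field_simps)

lemma face_min_face_join:
  assumes S: "finite S" "S \<noteq> {}" and y: "\<And>v. 0 \<le> y v" and y0: "face_min S y = 0"
    and l: "0 \<le> l" "real (card S) * l \<le> 1"
  shows "face_min S (face_join S l y) = l"
proof -
  obtain w where w: "w \<in> S" "y w = 0" using face_min_attained[OF S] y0 by metis
  have "Min ((\<lambda>v. face_join S l y v) ` S) = l"
  proof (rule Min_eqI)
    show "l \<le> z" if "z \<in> (\<lambda>v. face_join S l y v) ` S" for z
      using that l y by (auto simp: face_join_def)
    show "l \<in> (\<lambda>v. face_join S l y v) ` S"
      using w by (auto simp: face_join_def intro!: image_eqI[of _ _ w])
  qed (use S in simp)
  then show ?thesis by (simp add: face_min_def)
qed

lemma face_min_face_proj: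
  assumes S: "finite S" "S \<noteq> {}" and m: "real (card S) * face_min S x < 1"
  shows "face_min S (face_proj S x) = 0"
proof -
  obtain w where w: "w \<in> S" "x w = face_min S x" using face_min_attained[OF S] by blast
  have "Min ((\<lambda>v. face_proj S x v) ` S) = 0"
  proof (rule Min_eqI)
    show "0 \<le> z" if "z \<in> (\<lambda>v. face_proj S x v) ` S" for z
      using that m face_min_le[OF S(1), of _ x] by (auto simp: face_proj_def)
    show "0 \<in> (\<lambda>v. face_proj S x v) ` S"
      using w by (auto simp: face_proj_def intro!: image_eqI[of _ _ w])
  qed (use S in simp)
  then show ?thesis by (simp add: face_min_def)
qed

lemma support_face_proj:
  assumes "\<And>v. 0 \<le> x v" "finite S" "S \<noteq> {}"
  shows "{v. face_proj S x v \<noteq> 0} \<subseteq> {v. x v \<noteq> 0}"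
  using face_min_le[OF assms(2), of _ x] face_min_nonneg[of x, OF assms]
  by (force simp: face_proj_def split: if_splits)

lemma face_proj_in_geom_carrier:
  assumes K: "abstract_complex K" and S: "finite S" "S \<noteq> {}" and x: "x \<in> geom_carrier K"
    and m: "real (card S) * face_min S x < 1"
  shows "face_proj S x \<in> geom_carrier K"
proof (cases "face_min S x = 0")
  case True
  then show ?thesis using x by (simp add: face_proj_eq_self)
next
  case False
  let ?T = "{v. x v \<noteq> 0}"
  have x0: "\<And>v. 0 \<le> x v" using geom_carrierD(1)[OF x] .
  then have "0 < face_min S x" using False face_min_nonneg[of x, OF _ S] by fastforce
  then have ST: "S \<subseteq> ?T" using face_min_pos_iff[of x, OF x0 S] by blast
  have den: "0 < 1 - real (card S) * face_min S x" using m by simp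
  show ?thesis
  proof (rule geom_carrierI[OF K geom_carrierD(2)[OF x]])
    show "0 \<le> face_proj S x v" for v
      using den face_min_le[OF S(1), of v x] x0[of v] by (auto simp: face_proj_def)
    show "face_proj S x v = 0" if "v \<notin> ?T" for v
      using that ST by (auto simp: face_proj_def)
    have "(\<Sum>v\<in>?T. if v \<in> S then face_min S x else 0) = (\<Sum>v\<in>S. face_min S x)"
      by (rule sum.mono_neutral_cong_right) (use geom_carrier_finite_support[OF K x] ST in auto)
    then have "sum (face_proj S x) ?T
        = ((\<Sum>v\<in>?T. x v) - real (card S) * face_min S x) / (1 - real (card S) * face_min S x)"
      unfolding face_proj_def by (simp add: sum_divide_distrib[symmetric] sum_subtractf)
    then show "sum (face_proj S x) ?T = 1" using den geom_carrierD(3)[OF x] by simp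
  qed
qed

lemma face_join_in_geom_carrier:
  assumes K: "abstract_complex K" and S: "finite S" and y: "y \<in> geom_carrier K"
    and l: "0 \<le> l" "real (card S) * l \<le> 1"
    and face: "l = 0 \<or> {v. y v \<noteq> 0} \<union> S \<in> K"
  shows "face_join S l y \<in> geom_carrier K"
proof (cases "l = 0")
  case False
  let ?T = "{v. y v \<noteq> 0} \<union> S"
  have T: "?T \<in> K" using face False by auto
  have fin: "finite ?T" using K T by (rule abstract_complex_finite)
  show ?thesis
  proof (rule geom_carrierI[OF K T])
    show "0 \<le> face_join S l y v" for v
      using l geom_carrierD(1)[OF y, of v] by (auto simp: face_join_def)
    show "face_join S l y v = 0" if "v \<notin> ?T" for v using that by (auto simp: face_join_def)
    have "(\<Sum>v\<in>?T. if v \<in> S then l else 0) = (\<Sum>v\<in>S. l)"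
      by (rule sum.mono_neutral_cong_right) (use fin in auto)
    then show "sum (face_join S l y) ?T = 1"
      using geom_carrier_sum[OF K y fin] by (simp add: face_join_def sum.distrib flip: sum_distrib_left)
  qed
qed (use y in simp)

lemma support_face_proj_union_face:
  assumes K: "abstract_complex K" and S: "finite S" "S \<noteq> {}" and x: "x \<in> geom_carrier K"
    and pos: "0 < face_min S x"
  shows "{v. face_proj S x v \<noteq> 0} \<union> S \<in> K"
proof -
  have x0: "\<And>v. 0 \<le> x v" using geom_carrierD(1)[OF x] .
  have "S \<subseteq> {v. x v \<noteq> 0}" using pos face_min_pos_iff[of x, OF x0 S] by blast
  then show ?thesis
    using support_face_proj[of x, OF x0 S] abstract_complex_subset[OF K geom_carrierD(2)[OF x]]
    by (meson Un_least)
qed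

lemma face_join_face_proj_in_geom_carrier:
  assumes K: "abstract_complex K" and S: "finite S" "S \<noteq> {}" and x: "x \<in> geom_carrier K"
    and m: "real (card S) * face_min S x < 1"
    and l: "0 \<le> l" "real (card S) * l \<le> 1" and face: "l = 0 \<or> 0 < face_min S x"
  shows "face_join S l (face_proj S x) \<in> geom_carrier K"
    and "face_min S (face_join S l (face_proj S x)) = l"
proof -
  have y: "face_proj S x \<in> geom_carrier K" by (rule face_proj_in_geom_carrier[OF K S x m])
  have x0: "\<And>v. 0 \<le> x v" using geom_carrierD(1)[OF x] .
  show "face_join S l (face_proj S x) \<in> geom_carrier K"
    using face_join_in_geom_carrier[OF K S(1) y l] face support_face_proj_union_face[OF K S x] by blast
  show "face_min S (face_join S l (face_proj S x)) = l"
    by (rule face_min_face_join[OF S geom_carrierD(1)[OF y] face_min_face_proj[OF S m] l])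
qed

section \<open>Relative homology of a complex modulo the deletion of a face\<close>

definition deletion :: "'a set set \<Rightarrow> 'a set \<Rightarrow> 'a set set" where
  "deletion K S = {\<sigma> \<in> K. \<not> S \<subseteq> \<sigma>}"

text \<open>The join of the boundary of S with the link of S, that is, the link of the barycentre
  of S in the barycentric subdivision.\<close>
definition boundary_link :: "'a set set \<Rightarrow> 'a set \<Rightarrow> 'a set set" where
  "boundary_link K S = {\<sigma> \<in> K. \<not> S \<subseteq> \<sigma> \<and> \<sigma> \<union> S \<in> K}"

lemma deletion_subset: "deletion K S \<subseteq> K"
  unfolding deletion_def by auto

locale complex_face =
  fixes K :: "'a set set" and S :: "'a set"
  assumes complex: "abstract_complex K" and face: "S \<in> K" and nonempty: "S \<noteq> {}"
begin

lemma finite_face: "finite S"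
  using complex face by (rule abstract_complex_finite)

abbreviation "n \<equiv> real (card S)"

lemma n_pos: "0 < n"
  using finite_face nonempty by (simp add: card_gt_0_iff)

lemma geom_carrier_deletion: "geom_carrier (deletion K S) = {x \<in> geom_carrier K. face_min S x = 0}"
  using face_min_eq_0_iff[OF _ finite_face nonempty]
  unfolding geom_carrier_def deletion_def by auto

lemma geom_carrier_boundary_link:
  "geom_carrier (boundary_link K S) =
     {x \<in> geom_carrier K. face_min S x = 0 \<and> {v. x v \<noteq> 0} \<union> S \<in> K}"
  using face_min_eq_0_iff[OF _ finite_face nonempty]
  unfolding geom_carrier_def boundary_link_def by auto

text \<open>Since n * face_min S x \<le> 1 with equality only at the barycentre of S, punctured is
  |K| minus that barycentre, and star_nbhd is an open star-shaped neighbourhood of it.\<close>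
definition "punctured = {x \<in> geom_carrier K. n * face_min S x < 1}"
definition "star_nbhd = {x \<in> geom_carrier K. 1/2 < n * face_min S x}"
definition "punctured_star = {x \<in> geom_carrier K. 1/2 < n * face_min S x \<and> n * face_min S x < 1}"

lemma continuous_map_face_proj_punctured:
  "W \<subseteq> punctured \<Longrightarrow> continuous_map (subtopology (geom_real K) W) euclideanreal (\<lambda>x. face_proj S x v)"
  by (rule continuous_map_face_proj[OF finite_face nonempty, where \<phi> = "\<lambda>x. x"])
     (auto intro: continuous_intros simp: punctured_def topspace_subtopology)

lemma continuous_map_face_join_face_proj_punctured:
  assumes "W \<subseteq> punctured"
    and "continuous_map (prod_topology (top_of_set {0..1}) (subtopology (geom_real K) W)) euclideanreal l"
  shows "continuous_map (prod_topology (top_of_set {0..1}) (subtopology (geom_real K) W)) euclideanreal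
           (\<lambda>z. face_join S (l z) (face_proj S (snd z)) v)"
  by (intro continuous_map_face_join assms continuous_map_face_proj[OF finite_face nonempty]
        continuous_intros)
     (use assms(1) in \<open>auto simp: punctured_def topspace_subtopology\<close>)

lemma trivial_relative_homology_punctured_deletion:
  "trivial_group (relative_homology_group q (subtopology (geom_real K) punctured)
                    (geom_carrier (deletion K S)))"
proof (rule trivial_relative_homology_group_alt)
  let ?Y = "subtopology (geom_real K) punctured" and ?A = "geom_carrier (deletion K S)"
  show "continuous_map ?Y (subtopology ?Y ?A) (face_proj S)"
    unfolding subtopology_subtopology continuous_map_into_geom_real
    using continuous_map_face_proj_punctured[of punctured]
      face_proj_in_geom_carrier[OF complex finite_face nonempty]
      face_min_face_proj[OF finite_face nonempty] n_pos
    by (auto simp: punctured_def geom_carrier_deletion topspace_subtopology)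
  have A: "?A \<subseteq> geom_carrier K \<inter> punctured"
    using n_pos by (auto simp: geom_carrier_deletion punctured_def)
  have into: "face_join S (t * face_min S x) (face_proj S x) \<in> geom_carrier K \<inter> punctured"
    if "t \<in> {0..1}" "x \<in> geom_carrier K \<inter> punctured" for t x
  proof -
    have x: "x \<in> geom_carrier K" "n * face_min S x < 1" using that(2) by (auto simp: punctured_def)
    have m: "0 \<le> face_min S x"
      using face_min_nonneg[OF geom_carrierD(1)[OF x(1)] finite_face nonempty] .
    have "t * (n * face_min S x) \<le> n * face_min S x"
      by (rule mult_left_le_one_le) (use that(1) m n_pos in auto)
    then have l: "0 \<le> t * face_min S x" "n * (t * face_min S x) < 1"
      using that(1) m x(2) by (auto simp: mult.left_commute)
    have "t * face_min S x = 0 \<or> 0 < face_min S x" using m by auto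
    note e = face_join_face_proj_in_geom_carrier[OF complex finite_face nonempty x l(1) _ this]
    show ?thesis using e l(2) by (auto simp: punctured_def)
  qed
  show "homotopic_with (\<lambda>k. k ` ?A \<subseteq> ?A) ?Y ?Y (face_proj S) id"
    by (rule homotopic_with_geom_real[where
            h = "\<lambda>z. face_join S (fst z * face_min S (snd z)) (face_proj S (snd z))"])
       (use into A in \<open>auto intro!: continuous_map_face_join_face_proj_punctured continuous_intros
           finite_face nonempty image_cong simp: face_proj_eq_self geom_carrier_deletion
           face_join_face_proj punctured_def\<close>)
qed

lemma trivial_relative_homology_deletion_iff_punctured:
  "trivial_group (relative_homology_group p (geom_real K) (geom_carrier (deletion K S)))
     \<longleftrightarrow> trivial_group (relative_homology_group p (geom_real K) punctured)"
  by (rule trivial_relative_homology_group_triple)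
     (use n_pos trivial_relative_homology_punctured_deletion in
        \<open>auto simp: geom_carrier_deletion punctured_def\<close>)

lemma relative_homology_punctured_excision:
  "trivial_group (relative_homology_group p (geom_real K) punctured)
     \<longleftrightarrow> trivial_group (relative_homology_group p (subtopology (geom_real K) star_nbhd) punctured_star)"
proof -
  let ?G = "geom_real K" and ?U = "{x \<in> geom_carrier K. n * face_min S x \<le> 1/2}"
  have level: "continuous_map ?G euclideanreal (\<lambda>x. n * face_min S x)"
    by (intro continuous_intros finite_face nonempty)
  have "closedin ?G {x \<in> topspace ?G. n * face_min S x \<in> {..1/2}}"
    by (rule closedin_continuous_map_preimage[OF level]) simp
  then have U: "?G closure_of ?U = ?U" by (simp add: closure_of_closedin)
  have "openin ?G {x \<in> topspace ?G. n * face_min S x \<in> {..<1}}"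
    by (rule openin_continuous_map_preimage[OF level]) simp
  then have N: "?G interior_of punctured = punctured"
    by (simp add: interior_of_openin punctured_def)
  have UN: "?G closure_of ?U \<subseteq> ?G interior_of punctured"
    unfolding U N by (auto simp: punctured_def)
  have NK: "punctured \<subseteq> geom_carrier K" by (auto simp: punctured_def)
  have sets: "geom_carrier K - ?U = star_nbhd" "punctured - ?U = punctured_star"
    by (auto simp: star_nbhd_def punctured_def punctured_star_def)
  have G: "subtopology ?G (geom_carrier K) = ?G" by (metis subtopology_topspace topspace_geom_real)
  note excision = homology_excision_axiom[OF UN NK, of p, unfolded sets G]
  show ?thesis by (rule iso_trivial_group_iff[OF excision, symmetric]) simp_all
qed

definition "barycentre = (\<lambda>v. if v \<in> S then 1 / n else 0)"

lemma barycentre_in_star_nbhd: "barycentre \<in> star_nbhd"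
proof -
  have b: "barycentre \<in> geom_carrier K"
    by (rule geom_carrierI[OF complex face]) (use n_pos in \<open>auto simp: barycentre_def\<close>)
  have "barycentre ` S = {1 / n}" using nonempty by (auto simp: barycentre_def)
  then have "face_min S barycentre = 1 / n" by (simp add: face_min_def)
  then show ?thesis using b n_pos by (simp add: star_nbhd_def)
qed

lemma contractible_star_nbhd: "contractible_space (subtopology (geom_real K) star_nbhd)"
proof (rule contractible_space_geom_real_star_shaped[where d = barycentre])
  fix t :: real and x assume t: "t \<in> {0..1}" and "x \<in> geom_carrier K \<inter> star_nbhd"
  then have x: "x \<in> geom_carrier K" "1/2 < n * face_min S x" by (auto simp: star_nbhd_def)
  let ?y = "\<lambda>v. (1 - t) * x v + t * barycentre v"
  have "0 < n * face_min S x" using x(2) by linarith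
  then have "0 < face_min S x" using n_pos by (simp add: zero_less_mult_iff)
  then have "S \<subseteq> {v. x v \<noteq> 0}"
    using face_min_pos_iff[of x, OF geom_carrierD(1)[OF x(1)] finite_face nonempty] by blast
  then have "{v. x v \<noteq> 0} \<union> {v. barycentre v \<noteq> 0} = {v. x v \<noteq> 0}"
    by (auto simp: barycentre_def)
  then have y: "?y \<in> geom_carrier K"
    using geom_carrier_convex_combination[OF complex x(1) _ _ t] barycentre_in_star_nbhd
      geom_carrierD(2)[OF x(1)] by (simp add: star_nbhd_def)
  have lower: "(1 - t) * face_min S x + t / n \<le> face_min S ?y"
  proof (rule face_min_greatest[OF finite_face nonempty])
    fix v assume v: "v \<in> S"
    have "(1 - t) * face_min S x \<le> (1 - t) * x v"
      using t face_min_le[OF finite_face v, of x] by (intro mult_left_mono) auto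
    then show "(1 - t) * face_min S x + t / n \<le> ?y v" using v by (simp add: barycentre_def)
  qed
  have "(1 - t) * (n * face_min S x) + t = n * ((1 - t) * face_min S x + t / n)"
    using n_pos by (simp add: field_simps)
  also have "\<dots> \<le> n * face_min S ?y"
    using lower n_pos by (intro mult_left_mono) auto
  finally have "(1 - t) * (n * face_min S x) + t \<le> n * face_min S ?y" .
  moreover have "t * (n * face_min S x) \<le> t * 1"
    using t face_min_bound[OF complex x(1) finite_face] by (intro mult_left_mono) auto
  then have "n * face_min S x \<le> (1 - t) * (n * face_min S x) + t"
    by (simp add: algebra_simps)
  ultimately show "?y \<in> geom_carrier K \<inter> star_nbhd"
    using x(2) y by (auto simp: star_nbhd_def)
qed

lemma face_proj_punctured_star:
  assumes "x \<in> punctured_star"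
  shows "face_proj S x \<in> geom_carrier (boundary_link K S)"
proof -
  have x: "x \<in> geom_carrier K" "1/2 < n * face_min S x" "n * face_min S x < 1"
    using assms by (auto simp: punctured_star_def)
  have "0 < n * face_min S x" using x(2) by linarith
  then have "0 < face_min S x" using n_pos by (simp add: zero_less_mult_iff)
  then show ?thesis
    using face_proj_in_geom_carrier[OF complex finite_face nonempty x(1,3)]
      face_min_face_proj[OF finite_face nonempty x(3)]
      support_face_proj_union_face[OF complex finite_face nonempty x(1)]
    by (simp add: geom_carrier_boundary_link)
qed

lemma face_join_boundary_link:
  assumes "y \<in> geom_carrier (boundary_link K S)"
  shows "face_join S (2 / (3 * n)) y \<in> punctured_star"
    and "face_proj S (face_join S (2 / (3 * n)) y) = y"
proof -
  have y: "y \<in> geom_carrier K" "face_min S y = 0" "{v. y v \<noteq> 0} \<union> S \<in> K"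
    using assms by (auto simp: geom_carrier_boundary_link)
  have l: "0 \<le> 2 / (3 * n)" "n * (2 / (3 * n)) \<le> 1" "n * (2 / (3 * n)) = 2/3"
    using n_pos by auto
  have m: "face_min S (face_join S (2 / (3 * n)) y) = 2 / (3 * n)"
    by (rule face_min_face_join[OF finite_face nonempty geom_carrierD(1)[OF y(1)] y(2) l(1,2)])
  show "face_join S (2 / (3 * n)) y \<in> punctured_star"
    using face_join_in_geom_carrier[OF complex finite_face y(1) l(1,2)] y(3) m l(3)
    by (simp add: punctured_star_def)
  show "face_proj S (face_join S (2 / (3 * n)) y) = y"
    by (rule face_proj_face_join[OF m]) (simp add: l(3))
qed

lemma face_join_face_proj_punctured_star:
  assumes t: "t \<in> {0..1}" and "x \<in> punctured_star"
  shows "face_join S ((1 - t) * (2 / (3 * n)) + t * face_min S x) (face_proj S x) \<in> punctured_star"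
proof -
  have x: "x \<in> geom_carrier K" "1/2 < n * face_min S x" "n * face_min S x < 1"
    using assms(2) by (auto simp: punctured_star_def)
  define l where "l = (1 - t) * (2 / (3 * n)) + t * face_min S x"
  have nl: "n * l = (1 - t) * (2/3) + t * (n * face_min S x)"
    using n_pos by (simp add: l_def field_simps)
  have level: "1/2 < n * l" "n * l < 1"
    unfolding nl using t x(2,3) convex_bound_lt[of "2/3" 1 "n * face_min S x" "1 - t" t]
      convex_bound_lt[of "-(2/3)" "-(1/2)" "-(n * face_min S x)" "1 - t" t]
    by (auto simp: field_simps)
  have "0 < n * face_min S x" "0 < n * l" using level x(2) by linarith+
  then have "0 < face_min S x" "0 \<le> l" using n_pos by (auto simp: zero_less_mult_iff)
  then show ?thesis
    using face_join_face_proj_in_geom_carrier[OF complex finite_face nonempty x(1,3), of l] level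
    unfolding l_def[symmetric] by (auto simp: punctured_star_def)
qed

text \<open>The deformation slides the level n * face_min S x linearly to 2/3 along the ray from
  the barycentre; any level strictly between 1/2 and 1 would do.\<close>
lemma punctured_star_homotopy_equivalent_boundary_link:
  "subtopology (geom_real K) punctured_star homotopy_equivalent_space geom_real (boundary_link K S)"
proof -
  let ?D = "subtopology (geom_real K) punctured_star" and ?c = "2 / (3 * n)"
  have D: "punctured_star \<subseteq> punctured" by (auto simp: punctured_star_def punctured_def)
  have f: "continuous_map ?D (geom_real (boundary_link K S)) (face_proj S)"
    unfolding continuous_map_into_geom_real_full
    using continuous_map_face_proj_punctured[OF D] face_proj_punctured_star
    by (auto simp: topspace_subtopology)
  have g: "continuous_map (geom_real (boundary_link K S)) ?D (face_join S ?c)"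
    unfolding continuous_map_into_geom_real
    using face_join_boundary_link(1) by (auto intro!: continuous_map_face_join continuous_intros
        simp: punctured_star_def)
  have into: "face_join S ((1 - t) * ?c + t * face_min S x) (face_proj S x) \<in> geom_carrier K \<inter> punctured_star"
    if "t \<in> {0..1}" "x \<in> geom_carrier K \<inter> punctured_star" for t x
    using face_join_face_proj_punctured_star[of t x] that by (auto simp: punctured_star_def)
  have "homotopic_with (\<lambda>x. True) ?D ?D (face_join S ?c \<circ> face_proj S) id"
    by (rule homotopic_with_geom_real[where
            h = "\<lambda>z. face_join S ((1 - fst z) * ?c + fst z * face_min S (snd z)) (face_proj S (snd z))"])
       (use into D in \<open>auto intro!: continuous_map_face_join_face_proj_punctured continuous_intros
           finite_face nonempty simp: face_join_face_proj punctured_star_def\<close>)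
  moreover have "homotopic_with (\<lambda>x. True) (geom_real (boundary_link K S)) (geom_real (boundary_link K S))
                   (face_proj S \<circ> face_join S ?c) id"
    by (rule homotopic_with_equal) (use continuous_map_compose[OF g f] face_join_boundary_link(2) in auto)
  ultimately show ?thesis unfolding homotopy_equivalent_space_def using f g by blast
qed

lemma relative_homology_star_nbhd_iff_boundary_link:
  "trivial_group (relative_homology_group p (subtopology (geom_real K) star_nbhd) punctured_star)
     \<longleftrightarrow> trivial_reduced_homology (p - 1) (boundary_link K S)"
proof (cases "punctured_star = {}")
  case True
  then have "geom_carrier (boundary_link K S) = {}" using face_join_boundary_link(1) by blast
  then show ?thesis
    using True barycentre_in_star_nbhd trivial_homology_group_contractible_iff[OF contractible_star_nbhd]
    by (auto simp: trivial_reduced_homology_def star_nbhd_def topspace_subtopology)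
next
  case False
  let ?C = "subtopology (geom_real K) star_nbhd"
  have ne: "geom_carrier (boundary_link K S) \<noteq> {}" using False face_proj_punctured_star by blast
  have CD: "topspace ?C \<inter> punctured_star \<noteq> {}"
    using False by (auto simp: punctured_star_def star_nbhd_def topspace_subtopology)
  have sub: "subtopology ?C punctured_star = subtopology (geom_real K) punctured_star"
    by (auto simp: subtopology_subtopology star_nbhd_def punctured_star_def intro!: arg_cong2[where f = subtopology])
  have "trivial_group (relative_homology_group p ?C punctured_star)
     \<longleftrightarrow> trivial_group (reduced_homology_group (p - 1) (subtopology (geom_real K) punctured_star))"
    by (rule iso_trivial_group_iff[OF iso_relative_homology_of_contractible[OF contractible_star_nbhd CD,
            unfolded sub]]) simp_all
  also have "\<dots> \<longleftrightarrow> trivial_group (reduced_homology_group (p - 1) (geom_real (boundary_link K S)))"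
    by (rule isomorphic_group_triviality[OF homotopy_equivalent_space_imp_isomorphic_reduced_homology_groups[
            OF punctured_star_homotopy_equivalent_boundary_link]]) simp_all
  finally show ?thesis using ne by (simp add: trivial_reduced_homology_def)
qed

theorem trivial_relative_homology_deletion_iff:
  "trivial_group (relative_homology_group p (geom_real K) (geom_carrier (deletion K S)))
     \<longleftrightarrow> trivial_reduced_homology (p - 1) (boundary_link K S)"
  using trivial_relative_homology_deletion_iff_punctured relative_homology_punctured_excision
    relative_homology_star_nbhd_iff_boundary_link by blast

end

section \<open>Joins with the boundary of a simplex\<close>

definition complex_join :: "'a set set \<Rightarrow> 'a set set \<Rightarrow> 'a set set" where
  "complex_join K L = {\<sigma> \<union> \<tau> | \<sigma> \<tau>. \<sigma> \<in> K \<and> \<tau> \<in> L}"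

lemma complex_joinI: "\<sigma> \<in> K \<Longrightarrow> \<tau> \<in> L \<Longrightarrow> \<rho> = \<sigma> \<union> \<tau> \<Longrightarrow> \<rho> \<in> complex_join K L"
  unfolding complex_join_def by blast

lemma complex_joinE:
  "\<rho> \<in> complex_join K L \<Longrightarrow> (\<And>\<sigma> \<tau>. \<rho> = \<sigma> \<union> \<tau> \<Longrightarrow> \<sigma> \<in> K \<Longrightarrow> \<tau> \<in> L \<Longrightarrow> P) \<Longrightarrow> P"
  unfolding complex_join_def by blast

lemma abstract_complex_join:
  assumes K: "abstract_complex K" and L: "abstract_complex L"
  shows "abstract_complex (complex_join K L)"
  unfolding abstract_complex_def
proof (intro conjI ballI allI impI)
  fix \<rho> assume "\<rho> \<in> complex_join K L"
  then show "finite \<rho>"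
    by (rule complex_joinE) (use abstract_complex_finite[OF K] abstract_complex_finite[OF L] in blast)
next
  fix \<rho> \<rho>' assume "\<rho> \<in> complex_join K L" "\<rho>' \<subseteq> \<rho>"
  then show "\<rho>' \<in> complex_join K L"
  proof (elim complex_joinE)
    fix \<sigma> \<tau> assume "\<rho> = \<sigma> \<union> \<tau>" "\<sigma> \<in> K" "\<tau> \<in> L"
    then show ?thesis
      using \<open>\<rho>' \<subseteq> \<rho>\<close> abstract_complex_subset[OF K] abstract_complex_subset[OF L]
      by (intro complex_joinI[of "\<rho>' \<inter> \<sigma>" _ "\<rho>' \<inter> \<tau>"]) auto
  qed
qed

lemma abstract_complex_Pow: "finite F \<Longrightarrow> abstract_complex (Pow F)"
  unfolding abstract_complex_def by (auto intro: finite_subset)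

lemma abstract_complex_proper_subsets: "finite F \<Longrightarrow> abstract_complex {\<sigma>. \<sigma> \<subset> F}"
  unfolding abstract_complex_def by (auto intro: finite_subset)

lemma complex_join_boundary_singleton: "complex_join {\<sigma>. \<sigma> \<subset> {u}} L = L"
  unfolding complex_join_def by (auto simp: subset_singleton_iff)

lemma contractible_space_cone:
  assumes "finite F" "u \<in> F" "abstract_complex L" "{} \<in> L"
  shows "contractible_space (geom_real (complex_join (Pow F) L))"
proof (rule contractible_space_geom_real_apex)
  show "abstract_complex (complex_join (Pow F) L)"
    using assms by (intro abstract_complex_join abstract_complex_Pow)
  show "{u} \<in> complex_join (Pow F) L" using assms by (intro complex_joinI[of "{u}" _ "{}"]) auto
  show "insert u \<rho> \<in> complex_join (Pow F) L" if "\<rho> \<in> complex_join (Pow F) L" for \<rho>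
    using that
  proof (rule complex_joinE)
    fix \<sigma> \<tau> assume "\<rho> = \<sigma> \<union> \<tau>" "\<sigma> \<in> Pow F" "\<tau> \<in> L"
    then show ?thesis using assms(2) by (intro complex_joinI[of "insert u \<sigma>" _ \<tau>]) auto
  qed
qed

lemma deletion_join_boundary:
  assumes w: "w \<notin> F0" and disj: "\<forall>\<tau>\<in>L. \<tau> \<inter> insert w F0 = {}"
  shows "deletion (complex_join {\<sigma>. \<sigma> \<subset> insert w F0} L) {w} = complex_join (Pow F0) L"
proof (intro Set.set_eqI iffI)
  fix \<rho> assume "\<rho> \<in> deletion (complex_join {\<sigma>. \<sigma> \<subset> insert w F0} L) {w}"
  then have "\<rho> \<in> complex_join {\<sigma>. \<sigma> \<subset> insert w F0} L" "w \<notin> \<rho>" by (auto simp: deletion_def)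
  then show "\<rho> \<in> complex_join (Pow F0) L"
  proof (elim complex_joinE)
    fix \<sigma> \<tau> assume "\<rho> = \<sigma> \<union> \<tau>" "\<sigma> \<in> {\<sigma>. \<sigma> \<subset> insert w F0}" "\<tau> \<in> L"
    then show ?thesis using \<open>w \<notin> \<rho>\<close> by (intro complex_joinI[of \<sigma> _ \<tau>]) auto
  qed
next
  fix \<rho> assume "\<rho> \<in> complex_join (Pow F0) L"
  then show "\<rho> \<in> deletion (complex_join {\<sigma>. \<sigma> \<subset> insert w F0} L) {w}"
  proof (rule complex_joinE)
    fix \<sigma> \<tau> assume st: "\<rho> = \<sigma> \<union> \<tau>" "\<sigma> \<in> Pow F0" "\<tau> \<in> L"
    then have "w \<notin> \<tau>" using disj by auto
    then show ?thesis
      using st w by (auto simp: deletion_def intro!: complex_joinI[of \<sigma> _ \<tau>])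
  qed
qed

lemma boundary_link_join_boundary:
  assumes w: "w \<notin> F0" and disj: "\<forall>\<tau>\<in>L. \<tau> \<inter> insert w F0 = {}"
  shows "boundary_link (complex_join {\<sigma>. \<sigma> \<subset> insert w F0} L) {w} = complex_join {\<sigma>. \<sigma> \<subset> F0} L"
proof (intro Set.set_eqI iffI)
  let ?J = "complex_join {\<sigma>. \<sigma> \<subset> insert w F0} L"
  fix \<rho> assume "\<rho> \<in> boundary_link ?J {w}"
  then have \<rho>: "\<rho> \<in> ?J" "w \<notin> \<rho>" "\<rho> \<union> {w} \<in> ?J" by (auto simp: boundary_link_def)
  have "\<not> insert w F0 \<subseteq> \<rho> \<union> {w}"
    using \<rho>(3) disj by (elim complex_joinE) blast
  with \<rho>(1,2) show "\<rho> \<in> complex_join {\<sigma>. \<sigma> \<subset> F0} L"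
  proof (elim complex_joinE)
    fix \<sigma> \<tau> assume "\<rho> = \<sigma> \<union> \<tau>" "\<sigma> \<in> {\<sigma>. \<sigma> \<subset> insert w F0}" "\<tau> \<in> L"
    then show ?thesis
      using \<open>w \<notin> \<rho>\<close> \<open>\<not> insert w F0 \<subseteq> \<rho> \<union> {w}\<close>
      by (intro complex_joinI[of \<sigma> _ \<tau>]) auto
  qed
next
  fix \<rho> assume "\<rho> \<in> complex_join {\<sigma>. \<sigma> \<subset> F0} L"
  then show "\<rho> \<in> boundary_link (complex_join {\<sigma>. \<sigma> \<subset> insert w F0} L) {w}"
  proof (rule complex_joinE)
    fix \<sigma> \<tau> assume st: "\<rho> = \<sigma> \<union> \<tau>" "\<sigma> \<in> {\<sigma>. \<sigma> \<subset> F0}" "\<tau> \<in> L"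
    then have "w \<notin> \<tau>" using disj by auto
    have "insert w \<sigma> \<subset> insert w F0" using st(2) w by auto
    then have "\<rho> \<union> {w} \<in> complex_join {\<sigma>. \<sigma> \<subset> insert w F0} L"
      using st by (intro complex_joinI[of "insert w \<sigma>" _ \<tau>]) auto
    moreover have "\<rho> \<in> complex_join {\<sigma>. \<sigma> \<subset> insert w F0} L"
      using st by (intro complex_joinI[of \<sigma> _ \<tau>]) auto
    moreover have "w \<notin> \<rho>" using st w \<open>w \<notin> \<tau>\<close> by auto
    ultimately show ?thesis by (auto simp: boundary_link_def)
  qed
qed

text \<open>Coning off the deletion of a vertex w exhibits the join with the boundary of F as the
  suspension of the join with the boundary of F - {w}.\<close>
lemma trivial_reduced_homology_join_boundary_insert:
  assumes L: "abstract_complex L" "{} \<in> L" and F0: "finite F0" "F0 \<noteq> {}" "w \<notin> F0"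
    and disj: "\<forall>\<tau>\<in>L. \<tau> \<inter> insert w F0 = {}"
  shows "trivial_reduced_homology p (complex_join {\<sigma>. \<sigma> \<subset> insert w F0} L)
           \<longleftrightarrow> trivial_reduced_homology (p - 1) (complex_join {\<sigma>. \<sigma> \<subset> F0} L)"
proof -
  let ?J = "complex_join {\<sigma>. \<sigma> \<subset> insert w F0} L" and ?C = "complex_join (Pow F0) L"
  have J: "abstract_complex ?J"
    using F0 L by (intro abstract_complex_join abstract_complex_proper_subsets) auto
  have "{w} \<in> ?J" using F0 L by (intro complex_joinI[of "{w}" _ "{}"]) auto
  then interpret complex_face ?J "{w}" by unfold_locales (use J in auto)
  obtain u where u: "u \<in> F0" using F0 by blast
  have C: "?C = deletion ?J {w}" using deletion_join_boundary[OF F0(3) disj] by simp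
  have "{u} \<in> ?C" by (rule complex_joinI[of "{u}" _ "{}"]) (use u L(2) in auto)
  then have ne: "geom_carrier ?C \<noteq> {}"
    using geom_carrier_vertex[OF abstract_complex_join[OF abstract_complex_Pow[OF F0(1)] L(1)]] by blast
  have CJ: "?C \<subseteq> ?J" unfolding C by (rule deletion_subset)
  have "trivial_reduced_homology p ?J \<longleftrightarrow>
          trivial_group (relative_homology_group p (geom_real ?J) (geom_carrier ?C))"
    by (rule trivial_reduced_homology_iff_relative_contractible[OF CJ contractible_space_cone[OF F0(1) u L] ne])
  also have "\<dots> \<longleftrightarrow> trivial_reduced_homology (p - 1) (complex_join {\<sigma>. \<sigma> \<subset> F0} L)"
    unfolding C trivial_relative_homology_deletion_iff boundary_link_join_boundary[OF F0(3) disj] ..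
  finally show ?thesis .
qed

lemma trivial_reduced_homology_join_boundary:
  assumes L: "abstract_complex L" "{} \<in> L"
  shows "finite F \<Longrightarrow> F \<noteq> {} \<Longrightarrow> \<forall>\<tau>\<in>L. \<tau> \<inter> F = {} \<Longrightarrow>
     trivial_reduced_homology p (complex_join {\<sigma>. \<sigma> \<subset> F} L)
       \<longleftrightarrow> trivial_reduced_homology (p - int (card F) + 1) L"
proof (induction F arbitrary: p rule: finite_ne_induct)
  case (singleton u)
  then show ?case by (simp add: complex_join_boundary_singleton)
next
  case (insert w F0)
  then show ?case
    using trivial_reduced_homology_join_boundary_insert[OF L insert(1,2,3,5), of p] by simp
qed

section \<open>Homological connectivity\<close>

definition is_connectivity :: "ereal \<Rightarrow> (int \<Rightarrow> bool) \<Rightarrow> bool" where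
  "is_connectivity c T \<longleftrightarrow>
     (c = \<infinity> \<or> (\<exists>m::int. c = ereal (of_int m))) \<and> (\<forall>k::int. ereal (of_int k) \<le> c \<longleftrightarrow> (\<forall>i\<le>k. T i))"

lemma is_connectivity_le_iff:
  assumes c: "is_connectivity c T" and d: "is_connectivity d U"
  shows "c \<le> d \<longleftrightarrow> (\<forall>k. (\<forall>i\<le>k. T i) \<longrightarrow> (\<forall>i\<le>k. U i))"
proof
  assume "c \<le> d"
  then show "\<forall>k. (\<forall>i\<le>k. T i) \<longrightarrow> (\<forall>i\<le>k. U i)"
    using c d unfolding is_connectivity_def by (meson order_trans)
next
  assume TU: "\<forall>k. (\<forall>i\<le>k. T i) \<longrightarrow> (\<forall>i\<le>k. U i)"
  then have le: "ereal (of_int k) \<le> d" if "ereal (of_int k) \<le> c" for k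
    using that c d unfolding is_connectivity_def by blast
  consider "c = \<infinity>" | m where "c = ereal (of_int m)" using c unfolding is_connectivity_def by blast
  then show "c \<le> d"
  proof cases
    case 1
    then have "d \<noteq> ereal (of_int m)" for m using le[of "m + 1"] by auto
    then show ?thesis using d unfolding is_connectivity_def by auto
  qed (use le in simp)
qed

lemma is_connectivity_shift:
  assumes c: "is_connectivity c T"
  shows "is_connectivity (c - ereal (real n) + 1) (\<lambda>i. T (i + int n - 1))"
proof -
  have all: "(\<forall>i\<le>k. T (i + int n - 1)) \<longleftrightarrow> (\<forall>i\<le>k + int n - 1. T i)" for k
    by (metis add.commute add_le_cancel_left diff_add_cancel diff_add_eq diff_le_eq)
  consider "c = \<infinity>" | m where "c = ereal (of_int m)" using c unfolding is_connectivity_def by blast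
  then show ?thesis
  proof cases
    case 1
    then show ?thesis using c unfolding is_connectivity_def by (simp add: one_ereal_def) (meson order_refl)
  next
    case 2
    then have eq: "c - ereal (real n) + 1 = ereal (of_int (m - int n + 1))" by (simp add: one_ereal_def)
    have "ereal (of_int k) \<le> c - ereal (real n) + 1 \<longleftrightarrow> (\<forall>i\<le>k. T (i + int n - 1))" for k
    proof -
      have "ereal (of_int k) \<le> c - ereal (real n) + 1 \<longleftrightarrow> ereal (of_int (k + int n - 1)) \<le> c"
        unfolding eq using 2 by (simp; arith)
      also have "\<dots> \<longleftrightarrow> (\<forall>i\<le>k + int n - 1. T i)" using c unfolding is_connectivity_def by blast
      finally show ?thesis unfolding all .
    qed
    then show ?thesis unfolding is_connectivity_def eq by blast
  qed
qed

lemma is_connectivity_less_imp: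
  assumes c: "is_connectivity c T" and d: "is_connectivity d U" and less: "c < d"
    and T: "\<forall>i\<le>k. T i"
  shows "\<forall>i\<le>k + 1. U i"
proof -
  have "ereal (of_int k) \<le> c" using c T unfolding is_connectivity_def by blast
  then have kd: "ereal (of_int k) < d" using less by (rule order.strict_trans1)
  have "ereal (of_int (k + 1)) \<le> d"
  proof (cases "d = \<infinity>")
    case False
    then obtain m where m: "d = ereal (of_int m)" using d unfolding is_connectivity_def by blast
    then have "k < m" using kd by simp
    then show ?thesis using m by simp
  qed simp
  then show ?thesis using d unfolding is_connectivity_def by blast
qed

lemma connectivity_inequalities_of_exact:
  fixes n :: nat
  assumes X: "is_connectivity cX TX" and A: "is_connectivity cA TA" and L: "is_connectivity cL TL"
    and to_L: "\<And>i. TX i \<Longrightarrow> TA (i - 1) \<Longrightarrow> TL (i - int n)"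
    and from_L: "\<And>i. TL (i - int n) \<Longrightarrow> TA i \<Longrightarrow> TX i"
  shows "(cX > cA \<longrightarrow> cL \<ge> cA - ereal (real n) + 1) \<and> (cL \<ge> cA - ereal (real n) + 1 \<longrightarrow> cX \<ge> cA)"
proof (intro conjI impI)
  note A' = is_connectivity_shift[OF A, of n]
  assume less: "cA < cX"
  show "cA - ereal (real n) + 1 \<le> cL"
    unfolding is_connectivity_le_iff[OF A' L]
  proof (rule allI, rule impI)
    fix k assume shifted: "\<forall>i\<le>k. TA (i + int n - 1)"
    have TA: "TA i" if "i \<le> k + int n - 1" for i
      using shifted[rule_format, of "i - int n + 1"] that by simp
    then have TX: "TX i" if "i \<le> k + int n" for i
      using is_connectivity_less_imp[OF A X less, of "k + int n - 1"] that by auto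
    show "\<forall>i\<le>k. TL i"
    proof (intro allI impI)
      fix i assume "i \<le> k"
      then show "TL i" using to_L[of "i + int n"] TX[of "i + int n"] TA[of "i + int n - 1"] by simp
    qed
  qed
next
  assume "cA - ereal (real n) + 1 \<le> cL"
  then have shifted: "(\<forall>i\<le>k. TA (i + int n - 1)) \<Longrightarrow> (\<forall>i\<le>k. TL i)" for k
    using is_connectivity_le_iff[OF is_connectivity_shift[OF A, of n] L] by blast
  show "cA \<le> cX"
    unfolding is_connectivity_le_iff[OF A X]
  proof (rule allI, rule impI)
    fix k assume TA: "\<forall>i\<le>k. TA i"
    then have "\<forall>i\<le>k - int n + 1. TL i" by (intro shifted) auto
    then show "\<forall>i\<le>k. TX i" using from_L TA by auto
  qed
qed

lemma all_le_iff_le_Greatest: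
  fixes T :: "int \<Rightarrow> bool"
  assumes "\<forall>i\<le>k0. T i" and "\<not> T j"
  shows "(\<forall>i\<le>k. T i) \<longleftrightarrow> k \<le> (GREATEST k. \<forall>i\<le>k. T i)"
proof -
  define P where "P k \<longleftrightarrow> (\<forall>i\<le>k. T i)" for k
  have bound: "P k \<Longrightarrow> k < j" for k using assms(2) unfolding P_def by (meson not_le order_refl)
  define Q where "Q = {k. k0 \<le> k \<and> k \<le> j \<and> P k}"
  have Q: "finite Q" "k0 \<in> Q"
    using assms(1) bound[of k0] unfolding Q_def P_def by (auto intro: finite_subset[of _ "{k0..j}"])
  define m where "m = Max Q"
  have m: "m \<in> Q" unfolding m_def using Q by (intro Max_in) auto
  have max: "k \<le> m" if "P k" for k
  proof (cases "k0 \<le> k")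
    case True
    then have "k \<in> Q" unfolding Q_def using that bound[OF that] by auto
    then show ?thesis unfolding m_def using Q by auto
  qed (use m in \<open>auto simp: Q_def\<close>)
  have "(GREATEST k. P k) = m" using m max by (intro Greatest_equality) (auto simp: Q_def)
  moreover have "P k \<longleftrightarrow> k \<le> m" for k using m max unfolding Q_def P_def by auto
  ultimately show ?thesis unfolding P_def by simp
qed

lemma is_connectivity_conn_h_empty_complex:
  "is_connectivity (conn_h ({{}} :: 'a set set)) (\<lambda>i. trivial_reduced_homology i ({{}} :: 'a set set))"
proof -
  have "geom_carrier ({{}} :: 'a set set) = {}"
    using geom_carrier_eq_empty_iff[of "{{}}"] by (simp add: abstract_complex_def)
  then have "(\<forall>i\<le>k. trivial_reduced_homology i ({{}} :: 'a set set)) \<longleftrightarrow> (\<forall>i\<le>k. i \<noteq> -1)" for k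
    by (simp add: trivial_reduced_homology_def)
  also have "(\<forall>i\<le>k. i \<noteq> -1) \<longleftrightarrow> k \<le> -2" for k :: int
  proof
    assume "\<forall>i\<le>k. i \<noteq> -1"
    then have "\<not> -1 \<le> k" by blast
    then show "k \<le> -2" by simp
  qed auto
  finally have "(\<forall>i\<le>k. trivial_reduced_homology i ({{}} :: 'a set set)) \<longleftrightarrow> k \<le> -2" for k .
  moreover have "conn_h ({{}} :: 'a set set) = ereal (of_int (-2))" by (simp add: conn_h_def)
  ultimately show ?thesis unfolding is_connectivity_def by (auto intro: exI[of _ "-2"])
qed

lemma is_connectivity_conn_h:
  assumes K: "abstract_complex K" and e: "{} \<in> K"
  shows "is_connectivity (conn_h K) (\<lambda>i. trivial_reduced_homology i K)"
proof (cases "K = {{}}")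
  case True
  then show ?thesis using is_connectivity_conn_h_empty_complex by simp
next
  case False
  then have ne: "geom_carrier K \<noteq> {}" using geom_carrier_eq_empty_iff[OF K] e by auto
  define T where "T i \<longleftrightarrow> trivial_group (reduced_homology_group i (geom_real K))" for i
  have T: "trivial_reduced_homology i K \<longleftrightarrow> T i" for i
    using ne by (simp add: trivial_reduced_homology_def T_def)
  show ?thesis
  proof (cases "\<forall>i. T i")
    case True
    then show ?thesis using False by (simp add: is_connectivity_def conn_h_def T T_def)
  next
    case not_all: False
    then obtain j where j: "\<not> T j" by blast
    have "\<forall>i\<le>-1. T i"
      unfolding T_def by (simp add: trivial_reduced_homology_group)
    note G = all_le_iff_le_Greatest[OF this j]
    have conn: "conn_h K = ereal (of_int (GREATEST k. \<forall>i\<le>k. T i))"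
      using False not_all by (simp add: conn_h_def T_def)
    show ?thesis
      unfolding is_connectivity_def conn T
    proof (intro conjI allI)
      show "ereal (of_int k) \<le> ereal (of_int (GREATEST k. \<forall>i\<le>k. T i)) \<longleftrightarrow> (\<forall>i\<le>k. T i)" for k
        unfolding G[of k] by simp
    qed blast
  qed
qed

lemma conn_h_pair_inequalities:
  fixes n :: nat
  assumes K: "abstract_complex K" and A: "abstract_complex A" "A \<subseteq> K" "geom_carrier A \<noteq> {}"
    and L: "abstract_complex L" "{} \<in> L"
    and rel: "\<And>i. trivial_group (relative_homology_group i (geom_real K) (geom_carrier A))
                    \<longleftrightarrow> trivial_reduced_homology (i - int n) L"
  shows "(conn_h K > conn_h A \<longrightarrow> conn_h L \<ge> conn_h A - ereal (real n) + 1)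
       \<and> (conn_h L \<ge> conn_h A - ereal (real n) + 1 \<longrightarrow> conn_h K \<ge> conn_h A)"
proof (rule connectivity_inequalities_of_exact)
  have "{} \<in> A" using empty_face_if_geom_carrier_nonempty A(1,3) by blast
  then show "is_connectivity (conn_h K) (\<lambda>i. trivial_reduced_homology i K)"
    and "is_connectivity (conn_h A) (\<lambda>i. trivial_reduced_homology i A)"
    using A(2) is_connectivity_conn_h K A(1) by blast+
  show "is_connectivity (conn_h L) (\<lambda>i. trivial_reduced_homology i L)"
    by (rule is_connectivity_conn_h[OF L])
qed (use rel trivial_reduced_homology_pair[OF A(2,3)] in blast)+

section \<open>Independence complexes of hypergraphs\<close>

lemma abstract_complex_Ind: "finite W \<Longrightarrow> abstract_complex (Ind W E)"
  unfolding abstract_complex_def Ind_def by (auto intro: finite_subset)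

lemma empty_in_Ind: "(\<forall>G\<in>E. G \<noteq> {}) \<Longrightarrow> {} \<in> Ind W E"
  unfolding Ind_def by auto

lemma deletion_Ind_hdel: "F \<in> C \<Longrightarrow> deletion (Ind V (hdel C F)) F = Ind V C"
  unfolding deletion_def Ind_def hdel_def by auto

lemma Ind_colon_of_Ind_hdel:
  assumes "\<sigma> \<union> F \<in> Ind V (hdel C F)"
  shows "\<sigma> - F \<in> Ind (hcolon_vertices V C F) (hcolon_edges C F)"
proof -
  have V: "\<sigma> \<subseteq> V" and no_edge: "\<And>E. E \<in> C \<Longrightarrow> E \<noteq> F \<Longrightarrow> \<not> E \<subseteq> \<sigma> \<union> F"
    using assms unfolding Ind_def hdel_def by auto
  have "v \<notin> hnbr C F" if "v \<in> \<sigma> - F" for v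
  proof
    assume "v \<in> hnbr C F"
    then obtain E where E: "E \<in> C" "card (E - F) = 1" "v \<in> E - F" unfolding hnbr_def by blast
    then have "E - F = {v}" by (metis card_1_singletonE singletonD)
    then have "E \<subseteq> \<sigma> \<union> F" "E \<noteq> F" using that E(3) by auto
    then show False using no_edge[OF E(1)] by blast
  qed
  moreover have "\<not> G \<subseteq> \<sigma> - F" if G: "G \<in> hcolon_edges C F" for G
  proof
    assume "G \<subseteq> \<sigma> - F"
    moreover obtain E where "E \<in> C" "E \<noteq> F" "G = E - F"
      using G unfolding hcolon_edges_def hdel_def Let_def by auto
    ultimately show False using no_edge by auto
  qed
  ultimately show ?thesis
    using V unfolding Ind_def hcolon_vertices_def by auto
qed

text \<open>Take E' with E' - F inclusion-minimal below E - F: it is either an edge of C : F or a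
  single neighbour of F.\<close>
lemma hdel_edge_meets_colon:
  assumes hyp: "hypergraph V C" and FC: "F \<in> C" and E: "E \<in> hdel C F"
  shows "(\<exists>G\<in>hcolon_edges C F. G \<subseteq> E - F) \<or> (E - F) \<inter> hnbr C F \<noteq> {}"
proof -
  have finV: "finite V" and edges: "\<And>E. E \<in> C \<Longrightarrow> E \<subseteq> V"
    and inc: "\<And>E E'. E \<in> C \<Longrightarrow> E' \<in> C \<Longrightarrow> E \<subseteq> E' \<Longrightarrow> E = E'"
    using hyp unfolding hypergraph_def by auto
  define M where "M = {E - F | E. E \<in> hdel C F}"
  have "finite C" using finV edges by (meson Pow_iff finite_Pow_iff finite_subset subsetI)
  then have "finite {G \<in> M. G \<subseteq> E - F}" unfolding M_def hdel_def by simp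
  moreover have "E - F \<in> {G \<in> M. G \<subseteq> E - F}" using E unfolding M_def by blast
  ultimately obtain G where G: "G \<in> M" "G \<subseteq> E - F" and min: "\<And>H. H \<in> M \<Longrightarrow> H \<subseteq> G \<Longrightarrow> H = G"
    using finite_has_minimal[of "{G \<in> M. G \<subseteq> E - F}"] by (metis (no_types, lifting) empty_iff
        mem_Collect_eq order.trans)
  obtain E' where E': "E' \<in> C" "E' \<noteq> F" "G = E' - F" using G(1) unfolding M_def hdel_def by blast
  have "G \<noteq> {}" using inc[OF E'(1) FC] E' by auto
  moreover have "finite G" using E'(3) edges[OF E'(1)] finV by (meson Diff_subset finite_subset)
  ultimately have "0 < card G" by (simp add: card_gt_0_iff)
  then consider "2 \<le> card G" | "card G = 1" by linarith
  then show ?thesis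
  proof cases
    case 1
    then have "G \<in> hcolon_edges C F" using G(1) min unfolding hcolon_edges_def M_def Let_def by blast
    then show ?thesis using G(2) by blast
  next
    case 2
    then have "G \<subseteq> hnbr C F" using E' unfolding hnbr_def by blast
    then show ?thesis using G(2) \<open>G \<noteq> {}\<close> by blast
  qed
qed

lemma Ind_hdel_of_Ind_colon:
  assumes hyp: "hypergraph V C" and FC: "F \<in> C"
    and \<tau>: "\<tau> \<in> Ind (hcolon_vertices V C F) (hcolon_edges C F)"
  shows "F \<union> \<tau> \<in> Ind V (hdel C F)"
proof -
  have \<tau>V: "\<tau> \<subseteq> V - (F \<union> hnbr C F)" and \<tau>E: "\<And>G. G \<in> hcolon_edges C F \<Longrightarrow> \<not> G \<subseteq> \<tau>"
    using \<tau> unfolding Ind_def hcolon_vertices_def by auto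
  have "F \<subseteq> V" using hyp FC unfolding hypergraph_def by auto
  moreover have "\<not> E \<subseteq> F \<union> \<tau>" if "E \<in> hdel C F" for E
    using hdel_edge_meets_colon[OF hyp FC that] \<tau>V \<tau>E by blast
  ultimately show ?thesis using \<tau>V unfolding Ind_def by blast
qed

lemma boundary_link_Ind_hdel:
  assumes hyp: "hypergraph V C" and FC: "F \<in> C"
  shows "boundary_link (Ind V (hdel C F)) F
           = complex_join {\<sigma>. \<sigma> \<subset> F} (Ind (hcolon_vertices V C F) (hcolon_edges C F))"
proof (intro Set.set_eqI iffI)
  fix \<sigma> assume "\<sigma> \<in> boundary_link (Ind V (hdel C F)) F"
  then have "\<not> F \<subseteq> \<sigma>" "\<sigma> \<union> F \<in> Ind V (hdel C F)" unfolding boundary_link_def by auto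
  then show "\<sigma> \<in> complex_join {\<sigma>. \<sigma> \<subset> F} (Ind (hcolon_vertices V C F) (hcolon_edges C F))"
    using Ind_colon_of_Ind_hdel by (intro complex_joinI[of "\<sigma> \<inter> F" _ "\<sigma> - F"]) auto
next
  fix \<rho> assume "\<rho> \<in> complex_join {\<sigma>. \<sigma> \<subset> F} (Ind (hcolon_vertices V C F) (hcolon_edges C F))"
  then obtain \<sigma> \<tau> where st: "\<rho> = \<sigma> \<union> \<tau>" "\<sigma> \<subset> F"
    and \<tau>: "\<tau> \<in> Ind (hcolon_vertices V C F) (hcolon_edges C F)" by (rule complex_joinE) auto
  have "\<tau> \<inter> F = {}" using \<tau> unfolding Ind_def hcolon_vertices_def by auto
  then have "\<not> F \<subseteq> \<rho>" using st by auto
  moreover have F\<tau>: "F \<union> \<tau> \<in> Ind V (hdel C F)" by (rule Ind_hdel_of_Ind_colon[OF hyp FC \<tau>])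
  moreover have "\<rho> \<subseteq> F \<union> \<tau>" using st by auto
  then have "\<rho> \<in> Ind V (hdel C F)"
    using F\<tau> unfolding Ind_def by blast
  moreover have "\<rho> \<union> F = F \<union> \<tau>" using st by auto
  ultimately show "\<rho> \<in> boundary_link (Ind V (hdel C F)) F"
    unfolding boundary_link_def by auto
qed

lemma relative_homology_Ind_hdel_trivial_iff:
  assumes hyp: "hypergraph V C" and FC: "F \<in> C"
  shows "trivial_group (relative_homology_group i (geom_real (Ind V (hdel C F))) (geom_carrier (Ind V C)))
           \<longleftrightarrow> trivial_reduced_homology (i - int (card F)) (Ind (hcolon_vertices V C F) (hcolon_edges C F))"
proof -
  let ?L = "Ind (hcolon_vertices V C F) (hcolon_edges C F)"
  have finV: "finite V" and F: "F \<subseteq> V" "2 \<le> card F"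
    and inc: "\<And>E. E \<in> C \<Longrightarrow> E \<subseteq> F \<Longrightarrow> E = F"
    using hyp FC unfolding hypergraph_def by auto
  have "F \<in> Ind V (hdel C F)" using F(1) inc unfolding Ind_def hdel_def by auto
  moreover have "F \<noteq> {}" using F(2) by auto
  ultimately interpret complex_face "Ind V (hdel C F)" F
    by unfold_locales (use abstract_complex_Ind[OF finV] in auto)
  have L: "abstract_complex ?L" "{} \<in> ?L"
    using finV by (auto intro!: abstract_complex_Ind empty_in_Ind
        simp: hcolon_vertices_def hcolon_edges_def Let_def)
  have "trivial_reduced_homology (i - 1) (complex_join {\<sigma>. \<sigma> \<subset> F} ?L)
          \<longleftrightarrow> trivial_reduced_homology (i - 1 - int (card F) + 1) ?L"
    using finV F(1) nonempty
    by (intro trivial_reduced_homology_join_boundary[OF L]) (auto simp: Ind_def hcolon_vertices_def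
        intro: finite_subset)
  then show ?thesis
    using trivial_relative_homology_deletion_iff[of i]
    unfolding deletion_Ind_hdel[OF FC] boundary_link_Ind_hdel[OF hyp FC] by simp
qed

theorem lemma3p13:
  fixes V :: "'a set" and C :: "'a set set" and F :: "'a set"
  assumes "hypergraph V C" and "F \<in> C"
  shows "(conn_h (Ind V (hdel C F)) > conn_h (Ind V C) \<longrightarrow>
            conn_h (Ind (hcolon_vertices V C F) (hcolon_edges C F))
              \<ge> conn_h (Ind V C) - ereal (real (card F)) + 1)
       \<and> (conn_h (Ind (hcolon_vertices V C F) (hcolon_edges C F))
              \<ge> conn_h (Ind V C) - ereal (real (card F)) + 1 \<longrightarrow>
            conn_h (Ind V (hdel C F)) \<ge> conn_h (Ind V C))"
proof (rule conn_h_pair_inequalities[OF _ _ _ _ _ _ relative_homology_Ind_hdel_trivial_iff[OF assms]])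
  have finV: "finite V" and edges: "\<And>E. E \<in> C \<Longrightarrow> E \<subseteq> V \<and> 2 \<le> card E"
    using assms(1) unfolding hypergraph_def by auto
  then show K: "abstract_complex (Ind V (hdel C F))" and "abstract_complex (Ind V C)"
    by (simp_all add: abstract_complex_Ind)
  show "Ind V C \<subseteq> Ind V (hdel C F)" unfolding Ind_def hdel_def by auto
  obtain v where "v \<in> F" using edges[OF assms(2)] by fastforce
  then have "{v} \<in> Ind V C"
    using edges[of "{}"] edges[of "{v}"] edges[OF assms(2)] unfolding Ind_def
    by (auto simp: subset_singleton_iff)
  then show "geom_carrier (Ind V C) \<noteq> {}" using geom_carrier_vertex[OF abstract_complex_Ind[OF finV]] by blast
  show "abstract_complex (Ind (hcolon_vertices V C F) (hcolon_edges C F))"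
    "{} \<in> Ind (hcolon_vertices V C F) (hcolon_edges C F)"
    using finV by (auto intro!: abstract_complex_Ind empty_in_Ind
        simp: hcolon_vertices_def hcolon_edges_def Let_def)
qed

end
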